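(* Let $A\in M_n(\mathbb{C})$ be skew-symmetric ($A^\top=-A$). There is an $n\times n$ matrix $C=C(A)$, each of whose entries is a polynomial with real coefficients in the entries of $A$, such that the first column of $CAC^\top$ has all entries equal to zero except possibly the entry in the second row, and such that $\det(C(A))$, viewed as a polynomial in the entries of $A$, is not the zero polynomial. *)

theory Defs
  imports "Jordan_Normal_Form.Determinant"
begin

text \<open>Functions of an n x n complex matrix that are given by a polynomial with real
coefficients in the entries A(i,j), i,j < n (indices are 0-based).\<close>
inductive real_poly_fun :: "nat \<Rightarrow> (complex mat \<Rightarrow> complex) \<Rightarrow> bool" for n :: nat where
  const: "real_poly_fun n (\<lambda>A. complex_of_real c)"
| var: "i < n \<Longrightarrow> j < n \<Longrightarrow> real_poly_fun n (\<lambda>A. A $$ (i, j))"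
| add: "real_poly_fun n f \<Longrightarrow> real_poly_fun n g \<Longrightarrow> real_poly_fun n (\<lambda>A. f A + g A)"
| mult: "real_poly_fun n f \<Longrightarrow> real_poly_fun n g \<Longrightarrow> real_poly_fun n (\<lambda>A. f A * g A)"

end

theory Submission
  imports Defs
begin

text \<open>Take for \<open>C(A)\<close> the identity in its first two rows and \<open>A\<^sub>1\<^sub>0 e\<^sub>i - A\<^sub>i\<^sub>0 e\<^sub>1\<close>
  in row \<open>i \<ge> 2\<close>. Then the first column of \<open>C A\<close> has entries \<open>A\<^sub>0\<^sub>0 = 0\<close> (skew-symmetry),
  \<open>A\<^sub>1\<^sub>0\<close>, and \<open>A\<^sub>1\<^sub>0 A\<^sub>i\<^sub>0 - A\<^sub>i\<^sub>0 A\<^sub>1\<^sub>0 = 0\<close> for \<open>i \<ge> 2\<close>; multiplying by \<open>C\<^sup>T\<close> on the right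
  does not change it, because the first row of \<open>C\<close> is \<open>e\<^sub>0\<close>. Finally \<open>C\<close> is lower
  triangular with determinant \<open>A\<^sub>1\<^sub>0^(n-2)\<close>, which is \<open>1\<close> at the skew-symmetric matrix
  \<open>e\<^sub>1 e\<^sub>0\<^sup>T - e\<^sub>0 e\<^sub>1\<^sup>T\<close>.\<close>

lemma real_poly_fun_zero: "real_poly_fun n (\<lambda>A. 0)"
  using real_poly_fun.const[of n 0] by simp

lemma real_poly_fun_one: "real_poly_fun n (\<lambda>A. 1)"
  using real_poly_fun.const[of n 1] by simp

lemma real_poly_fun_uminus:
  assumes "real_poly_fun n f"
  shows "real_poly_fun n (\<lambda>A. - f A)"
  using real_poly_fun.mult[OF real_poly_fun.const[of n "-1"] assms] by simp

lemma skew_symmetric_entry: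
  assumes "A \<in> carrier_mat n n" "transpose_mat A = - A" "i < n" "j < n"
  shows "A $$ (j, i) = - A $$ (i, j)"
proof -
  have "transpose_mat A $$ (i, j) = (- A) $$ (i, j)" using assms(2) by simp
  then show ?thesis using assms(1,3,4) by simp
qed

lemma skew_symmetric_diag:
  fixes A :: "'a :: {idom, ring_char_0} mat"
  assumes "A \<in> carrier_mat n n" "transpose_mat A = - A" "i < n"
  shows "A $$ (i, i) = 0"
proof -
  have "A $$ (i, i) = - A $$ (i, i)" using skew_symmetric_entry[OF assms assms(3)] .
  then show ?thesis by simp
qed

lemma mult_transpose_first_col:
  fixes M C :: "'a :: semiring_1 mat"
  assumes "M \<in> carrier_mat m n" "C \<in> carrier_mat k n" "i < m" "0 < k" "0 < n"
    and "row C 0 = unit_vec n 0"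
  shows "(M * transpose_mat C) $$ (i, 0) = M $$ (i, 0)"
  using assms by simp

definition elim_mat :: "nat \<Rightarrow> complex mat \<Rightarrow> complex mat" where
  "elim_mat n A = mat n n (\<lambda>(i, j).
     if i < 2 then (if i = j then 1 else 0)
     else if j = i then A $$ (1, 0) else if j = 1 then - A $$ (i, 0) else 0)"

lemma elim_mat_carrier: "elim_mat n A \<in> carrier_mat n n"
  by (simp add: elim_mat_def)

lemma real_poly_fun_elim_mat:
  assumes "i < n" "j < n"
  shows "real_poly_fun n (\<lambda>A. elim_mat n A $$ (i, j))"
proof (cases "i < 2")
  case True
  then show ?thesis
    using assms real_poly_fun_zero real_poly_fun_one by (simp add: elim_mat_def)
next
  case False
  have "real_poly_fun n (\<lambda>A. A $$ (1, 0))"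
    using False assms by (intro real_poly_fun.var) auto
  moreover have "real_poly_fun n (\<lambda>A. - A $$ (i, 0))"
    using assms by (intro real_poly_fun_uminus real_poly_fun.var) auto
  ultimately show ?thesis
    using False assms real_poly_fun_zero
    by (cases "j = i"; cases "j = 1") (simp_all add: elim_mat_def)
qed

lemma row_elim_mat_0:
  assumes "0 < n"
  shows "row (elim_mat n A) 0 = unit_vec n 0"
  using assms by (auto simp: elim_mat_def)

lemma elim_mat_mult_first_col:
  assumes A: "A \<in> carrier_mat n n" "transpose_mat A = - A"
    and i: "i < n" "i \<noteq> 1"
  shows "(elim_mat n A * A) $$ (i, 0) = 0"
proof -
  let ?C = "elim_mat n A"
  have "(?C * A) $$ (i, 0) = (\<Sum>k<n. ?C $$ (i, k) * A $$ (k, 0))"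
    using A i by (simp add: elim_mat_def scalar_prod_def lessThan_atLeast0)
  also have "\<dots> = (\<Sum>k\<in>(if i = 0 then {0} else {1, i}). ?C $$ (i, k) * A $$ (k, 0))"
    by (rule sum.mono_neutral_right) (use i in \<open>auto simp: elim_mat_def\<close>)
  also have "\<dots> = 0"
    using i skew_symmetric_diag[OF A, of 0] by (auto simp: elim_mat_def)
  finally show ?thesis .
qed

lemma det_elim_mat: "det (elim_mat n A) = A $$ (1, 0) ^ (n - 2)"
proof -
  have "det (elim_mat n A) = prod_list (diag_mat (elim_mat n A))"
    by (rule det_lower_triangular[OF _ elim_mat_carrier]) (auto simp: elim_mat_def)
  also have "\<dots> = (\<Prod>i<n. if i < 2 then 1 else A $$ (1, 0))"
    unfolding diag_mat_def prod.distinct_set_conv_list[symmetric, OF distinct_upt]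
    by (rule prod.cong) (auto simp: elim_mat_def)
  also have "\<dots> = (\<Prod>i\<in>{..<n} - {..<2}. A $$ (1, 0))"
    by (rule prod.mono_neutral_cong_right) auto
  finally show ?thesis by simp
qed

definition std_skew_mat :: "nat \<Rightarrow> complex mat" where
  "std_skew_mat n = mat n n (\<lambda>(i, j).
     if (i, j) = (1, 0) then 1 else if (i, j) = (0, 1) then -1 else 0)"

lemma std_skew_mat_carrier: "std_skew_mat n \<in> carrier_mat n n"
  by (simp add: std_skew_mat_def)

lemma transpose_std_skew_mat: "transpose_mat (std_skew_mat n) = - std_skew_mat n"
  by (rule eq_matI) (auto simp: std_skew_mat_def)

lemma det_elim_mat_std_skew_mat: "det (elim_mat n (std_skew_mat n)) = 1"
  by (cases "n < 2") (simp_all add: det_elim_mat std_skew_mat_def)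

theorem lemmaI4:
  fixes n :: nat
  shows "\<exists>C :: complex mat \<Rightarrow> complex mat.
     (\<forall>A. C A \<in> carrier_mat n n) \<and>
     (\<forall>i<n. \<forall>j<n. real_poly_fun n (\<lambda>A. C A $$ (i, j))) \<and>
     (\<forall>A. A \<in> carrier_mat n n \<longrightarrow> transpose_mat A = - A \<longrightarrow>
        (\<forall>i<n. i \<noteq> 1 \<longrightarrow> (C A * A * transpose_mat (C A)) $$ (i, 0) = 0)) \<and>
     (\<exists>A \<in> carrier_mat n n. transpose_mat A = - A \<and> det (C A) \<noteq> 0)"
proof (intro exI[of _ "elim_mat n"] conjI allI impI)
  fix A :: "complex mat" and i
  assume A: "A \<in> carrier_mat n n" "transpose_mat A = - A" and i: "i < n" "i \<noteq> 1"
  have "(elim_mat n A * A * transpose_mat (elim_mat n A)) $$ (i, 0) = (elim_mat n A * A) $$ (i, 0)"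
    using A(1) i(1) elim_mat_carrier[of n A]
    by (intro mult_transpose_first_col[OF _ elim_mat_carrier] row_elim_mat_0) auto
  also have "\<dots> = 0" using elim_mat_mult_first_col[OF A i] .
  finally show "(elim_mat n A * A * transpose_mat (elim_mat n A)) $$ (i, 0) = 0" .
next
  show "\<exists>A\<in>carrier_mat n n. transpose_mat A = - A \<and> det (elim_mat n A) \<noteq> 0"
    using transpose_std_skew_mat det_elim_mat_std_skew_mat
    by (intro bexI[OF _ std_skew_mat_carrier]) simp
qed (simp_all add: elim_mat_carrier real_poly_fun_elim_mat)

end
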